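(* Let $G$ be a graph with no edge $e$ satisfying $|F_e|\ge 4$, no induced chordless cycle on 4 vertices, and no induced path on at least 7 vertices, and let $u,v,w$ be an induced path on three vertices in $G$, with $B_i$, $E_1$ and $j$ defined from $u,v,w$ as in the context. If $j\ge 2$, then the induced subgraph $G[B_2\cup\cdots\cup B_j]$ (meaning $G[\bigcup_{i\ge2}B_i]$ if $j=\infty$) is a collection of at most $|E_1|$ vertex-disjoint paths, i.e., each of its connected components is a path (possibly a single vertex) and it has at most $|E_1|$ connected components.
   Context: All graphs are finite, simple and undirected. For an edge $e$ of $G$, $F_e$ denotes the set of all edges $e'$ of $G$ such that $V(e)\cup V(e')$ induces a path on three vertices in $G$. Let $u,v,w$ be an induced path on three vertices ($uv,vw\in E(G)$, $uw\notin E(G)$), and $A=\{u,v,w\}$. $B$ is the set of vertices not in $A$ with exactly one or two neighbors in $A$; $C$ is the set of vertices adjacent to all three vertices of $A$; $D$ is the set of vertices not in $A\cup B\cup C$ with at least one neighbor in $C$. For $i\ge1$, $B_i$ is the set of vertices $x\notin A\cup B\cup C\cup D$ whose distance in $G$ to the set $B$ is exactly $i$; $B_0=B$, $B_{-1}=A$. For $i\ge0$, $E_i$ is the set of edges with one endpoint in $B_i$ and the other in $B_{i+1}$. $j$ is the minimum index $i\ge0$ such that there is an edge $e\in E_i$ with $|F_e|\ge3$, and $j=\infty$ if no such index exists. *)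

theory Defs
  imports Main "HOL-Library.Extended_Nat"
begin

definition simple_graph :: "'a set \<Rightarrow> ('a \<Rightarrow> 'a \<Rightarrow> bool) \<Rightarrow> bool" where
  "simple_graph V adj \<longleftrightarrow> finite V \<and> (\<forall>x y. adj x y \<longrightarrow> adj y x)
     \<and> (\<forall>x. \<not> adj x x) \<and> (\<forall>x y. adj x y \<longrightarrow> x \<in> V \<and> y \<in> V)"

definition edges :: "('a \<Rightarrow> 'a \<Rightarrow> bool) \<Rightarrow> 'a set set" where
  "edges adj = {{x, y} | x y. adj x y}"

definition induces_P3 :: "('a \<Rightarrow> 'a \<Rightarrow> bool) \<Rightarrow> 'a set \<Rightarrow> bool" where
  "induces_P3 adj S \<longleftrightarrow> (\<exists>a b c. a \<noteq> b \<and> b \<noteq> c \<and> a \<noteq> c \<and> S = {a, b, c}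
      \<and> adj a b \<and> adj b c \<and> \<not> adj a c)"

definition Fset :: "('a \<Rightarrow> 'a \<Rightarrow> bool) \<Rightarrow> 'a set \<Rightarrow> 'a set set" where
  "Fset adj e = {e' \<in> edges adj. induces_P3 adj (e \<union> e')}"

definition induced_path :: "'a set \<Rightarrow> ('a \<Rightarrow> 'a \<Rightarrow> bool) \<Rightarrow> 'a list \<Rightarrow> bool" where
  "induced_path V adj xs \<longleftrightarrow> xs \<noteq> [] \<and> distinct xs \<and> set xs \<subseteq> V \<and>
     (\<forall>i < length xs. \<forall>k < length xs. adj (xs ! i) (xs ! k) \<longleftrightarrow> (i = k + 1 \<or> k = i + 1))"

definition induced_C4 :: "('a \<Rightarrow> 'a \<Rightarrow> bool) \<Rightarrow> 'a \<Rightarrow> 'a \<Rightarrow> 'a \<Rightarrow> 'a \<Rightarrow> bool" where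
  "induced_C4 adj a b c d \<longleftrightarrow> distinct [a, b, c, d] \<and> adj a b \<and> adj b c \<and> adj c d \<and> adj d a
     \<and> \<not> adj a c \<and> \<not> adj b d"

definition walk_in :: "('a \<Rightarrow> 'a \<Rightarrow> bool) \<Rightarrow> 'a set \<Rightarrow> 'a list \<Rightarrow> bool" where
  "walk_in adj S xs \<longleftrightarrow> xs \<noteq> [] \<and> set xs \<subseteq> S \<and>
     (\<forall>i. i + 1 < length xs \<longrightarrow> adj (xs ! i) (xs ! (i + 1)))"

definition dist_le :: "'a set \<Rightarrow> ('a \<Rightarrow> 'a \<Rightarrow> bool) \<Rightarrow> 'a \<Rightarrow> 'a set \<Rightarrow> nat \<Rightarrow> bool" where
  "dist_le V adj x T n \<longleftrightarrow> (\<exists>xs. walk_in adj V xs \<and> hd xs = x \<and> last xs \<in> T \<and> length xs \<le> n + 1)"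

definition Aset :: "'a \<Rightarrow> 'a \<Rightarrow> 'a \<Rightarrow> 'a set" where
  "Aset u v w = {u, v, w}"

definition Bbase :: "'a set \<Rightarrow> ('a \<Rightarrow> 'a \<Rightarrow> bool) \<Rightarrow> 'a \<Rightarrow> 'a \<Rightarrow> 'a \<Rightarrow> 'a set" where
  "Bbase V adj u v w = {x \<in> V - Aset u v w.
      card {y \<in> Aset u v w. adj x y} = 1 \<or> card {y \<in> Aset u v w. adj x y} = 2}"

definition Cset :: "'a set \<Rightarrow> ('a \<Rightarrow> 'a \<Rightarrow> bool) \<Rightarrow> 'a \<Rightarrow> 'a \<Rightarrow> 'a \<Rightarrow> 'a set" where
  "Cset V adj u v w = {x \<in> V. adj x u \<and> adj x v \<and> adj x w}"

definition Dset :: "'a set \<Rightarrow> ('a \<Rightarrow> 'a \<Rightarrow> bool) \<Rightarrow> 'a \<Rightarrow> 'a \<Rightarrow> 'a \<Rightarrow> 'a set" where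
  "Dset V adj u v w = {x \<in> V - (Aset u v w \<union> Bbase V adj u v w \<union> Cset V adj u v w).
      \<exists>y \<in> Cset V adj u v w. adj x y}"

definition Bl :: "'a set \<Rightarrow> ('a \<Rightarrow> 'a \<Rightarrow> bool) \<Rightarrow> 'a \<Rightarrow> 'a \<Rightarrow> 'a \<Rightarrow> nat \<Rightarrow> 'a set" where
  "Bl V adj u v w i = (if i = 0 then Bbase V adj u v w else
     {x \<in> V - (Aset u v w \<union> Bbase V adj u v w \<union> Cset V adj u v w \<union> Dset V adj u v w).
        dist_le V adj x (Bbase V adj u v w) i \<and> \<not> dist_le V adj x (Bbase V adj u v w) (i - 1)})"

definition Eset :: "'a set \<Rightarrow> ('a \<Rightarrow> 'a \<Rightarrow> bool) \<Rightarrow> 'a \<Rightarrow> 'a \<Rightarrow> 'a \<Rightarrow> nat \<Rightarrow> 'a set set" where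
  "Eset V adj u v w i = {{x, y} | x y. adj x y \<and> x \<in> Bl V adj u v w i \<and> y \<in> Bl V adj u v w (Suc i)}"

definition jidx :: "'a set \<Rightarrow> ('a \<Rightarrow> 'a \<Rightarrow> bool) \<Rightarrow> 'a \<Rightarrow> 'a \<Rightarrow> 'a \<Rightarrow> enat" where
  "jidx V adj u v w =
     (if \<exists>i. \<exists>e \<in> Eset V adj u v w i. card (Fset adj e) \<ge> 3
      then enat (LEAST i. \<exists>e \<in> Eset V adj u v w i. card (Fset adj e) \<ge> 3)
      else \<infinity>)"

definition components :: "('a \<Rightarrow> 'a \<Rightarrow> bool) \<Rightarrow> 'a set \<Rightarrow> 'a set set" where
  "components adj S = {{y. \<exists>xs. walk_in adj S xs \<and> hd xs = x \<and> last xs = y} | x. x \<in> S}"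

end

theory Submission
  imports Defs
begin

text \<open>
  Call B_i the i-th level and put A below B_0. A neighbour of a vertex of B_i (i >= 1) lies in
  a level again: it is not in A or C by construction, and a neighbour d in D, adjacent to some
  c in C, would give the edge cd four P3-extensions (through u, v, w and through the vertex).

  Below j every edge e between consecutive levels has |F_e| <= 2, so once one end of e has a
  private neighbour with respect to the other, that other end has at most one. For 2 <= i <= j
  this shows: a vertex of B_(i-1) has at most one neighbour in B_i; a vertex of B_i has at most
  one neighbour in B_i and B_(i+1) together; and if i >= 3, a vertex y of B_i has only one
  neighbour in B_(i-1). For the last claim take two such neighbours x, x' and a neighbour z of x
  in B_(i-2). If x and x' are adjacent, z has both as neighbours in B_(i-1), otherwise the edge
  zx would have three P3-extensions. If they are not, then z adjacent to x' gives an induced C4,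
  and otherwise x', y, x, z followed by an induced path descending from z to A has at least seven
  vertices.

  So G[B_2 \<union> ... \<union> B_j] has maximum degree 2, and its vertices in B_2 have degree at most 1.
  Following neighbours in lower levels, every component meets B_2, so it is an induced path, and
  there are at most |B_2| <= |E_1| components.
\<close>

section \<open>Walks, components and induced paths\<close>

lemma walk_in_Cons:
  "walk_in adj S (x # xs) \<longleftrightarrow> x \<in> S \<and> (xs = [] \<or> adj x (hd xs) \<and> walk_in adj S xs)"
  unfolding walk_in_def by (cases xs) (auto simp: nth_Cons' less_Suc_eq_0_disj)

lemma rtranclp_leaves_set:
  assumes "r\<^sup>*\<^sup>* a b" "a \<in> X" "b \<notin> X"
  shows "\<exists>c d. c \<in> X \<and> d \<notin> X \<and> r c d"
  using assms
proof (induction rule: rtranclp_induct)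
  case (step y z)
  then show ?case by (cases "y \<in> X") blast+
qed simp

definition adj_on :: "('a \<Rightarrow> 'a \<Rightarrow> bool) \<Rightarrow> 'a set \<Rightarrow> 'a \<Rightarrow> 'a \<Rightarrow> bool" where
  "adj_on adj S x y \<longleftrightarrow> adj x y \<and> x \<in> S \<and> y \<in> S"

definition component_of :: "('a \<Rightarrow> 'a \<Rightarrow> bool) \<Rightarrow> 'a set \<Rightarrow> 'a \<Rightarrow> 'a set" where
  "component_of adj S x = {y. \<exists>xs. walk_in adj S xs \<and> hd xs = x \<and> last xs = y}"

lemma components_eq_image: "components adj S = component_of adj S ` S"
  unfolding components_def component_of_def by (rule Setcompr_eq_image)

lemma walk_in_rtranclp: "walk_in adj S xs \<Longrightarrow> (adj_on adj S)\<^sup>*\<^sup>* (hd xs) (last xs)"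
proof (induction xs)
  case (Cons x xs)
  show ?case
  proof (cases "xs = []")
    case False
    then have "x \<in> S" "adj x (hd xs)" "walk_in adj S xs"
      using Cons.prems by (auto simp: walk_in_Cons)
    moreover from \<open>walk_in adj S xs\<close> have "hd xs \<in> S"
      unfolding walk_in_def by auto
    ultimately have "adj_on adj S x (hd xs)" "(adj_on adj S)\<^sup>*\<^sup>* (hd xs) (last xs)"
      using Cons.IH unfolding adj_on_def by blast+
    then show ?thesis
      using False by (simp add: converse_rtranclp_into_rtranclp)
  qed simp
qed (simp add: walk_in_def)

lemma rtranclp_walk_in:
  "(adj_on adj S)\<^sup>*\<^sup>* x y \<Longrightarrow> x \<in> S \<Longrightarrow> \<exists>xs. walk_in adj S xs \<and> hd xs = x \<and> last xs = y"
proof (induction rule: converse_rtranclp_induct)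
  case base
  then show ?case by (intro exI[of _ "[y]"]) (simp add: walk_in_def)
next
  case (step x z)
  then have "adj x z" "z \<in> S" unfolding adj_on_def by blast+
  then obtain xs where xs: "walk_in adj S xs" "hd xs = z" "last xs = y"
    using step.IH by blast
  then have "xs \<noteq> []" by (simp add: walk_in_def)
  with xs \<open>adj x z\<close> \<open>x \<in> S\<close> show ?case
    by (intro exI[of _ "x # xs"]) (simp add: walk_in_Cons)
qed

lemma mem_component_of_iff:
  assumes "x \<in> S"
  shows "y \<in> component_of adj S x \<longleftrightarrow> (adj_on adj S)\<^sup>*\<^sup>* x y"
proof
  assume "y \<in> component_of adj S x"
  then obtain xs where "walk_in adj S xs" "hd xs = x" "last xs = y"
    unfolding component_of_def mem_Collect_eq by blast
  then show "(adj_on adj S)\<^sup>*\<^sup>* x y" using walk_in_rtranclp by blast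
next
  assume "(adj_on adj S)\<^sup>*\<^sup>* x y"
  then have "\<exists>xs. walk_in adj S xs \<and> hd xs = x \<and> last xs = y"
    using assms by (rule rtranclp_walk_in)
  then show "y \<in> component_of adj S x" unfolding component_of_def mem_Collect_eq .
qed

lemma component_of_subset: "x \<in> S \<Longrightarrow> component_of adj S x \<subseteq> S"
proof
  fix y assume "x \<in> S" "y \<in> component_of adj S x"
  then have "(adj_on adj S)\<^sup>*\<^sup>* x y" by (simp add: mem_component_of_iff)
  then show "y \<in> S" using \<open>x \<in> S\<close>
    by (induction rule: rtranclp_induct) (simp_all add: adj_on_def)
qed

locale finite_simple_graph =
  fixes V :: "'a set" and adj :: "'a \<Rightarrow> 'a \<Rightarrow> bool"
  assumes simple_graph: "simple_graph V adj"
begin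

lemma adj_sym: "adj x y \<Longrightarrow> adj y x"
  and adj_irrefl: "\<not> adj x x"
  and adj_in_V: "adj x y \<Longrightarrow> x \<in> V" "adj x y \<Longrightarrow> y \<in> V"
  and finite_V: "finite V"
  using simple_graph unfolding simple_graph_def by blast+

lemma adj_neq: "adj x y \<Longrightarrow> x \<noteq> y"
  using adj_irrefl by blast

lemma component_of_eq:
  assumes "x \<in> S" "y \<in> component_of adj S x"
  shows "component_of adj S y = component_of adj S x"
proof -
  have "symp (adj_on adj S)" by (rule sympI) (simp add: adj_on_def adj_sym)
  then have sym: "symp (adj_on adj S)\<^sup>*\<^sup>*" by (rule symp_rtranclp)
  have xy: "(adj_on adj S)\<^sup>*\<^sup>* x y" using assms(2) mem_component_of_iff[OF assms(1)] by blast
  then have yx: "(adj_on adj S)\<^sup>*\<^sup>* y x" by (rule sympD[OF sym])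
  have "y \<in> S" using assms(2) component_of_subset[OF assms(1)] by blast
  show ?thesis
  proof (intro set_eqI)
    fix z
    have "(adj_on adj S)\<^sup>*\<^sup>* y z \<longleftrightarrow> (adj_on adj S)\<^sup>*\<^sup>* x z"
      using rtranclp_trans[OF xy] rtranclp_trans[OF yx] by blast
    then show "z \<in> component_of adj S y \<longleftrightarrow> z \<in> component_of adj S x"
      using mem_component_of_iff[OF \<open>y \<in> S\<close>] mem_component_of_iff[OF assms(1)] by blast
  qed
qed

lemma dist_le_mono: "dist_le V adj x T n \<Longrightarrow> n \<le> m \<Longrightarrow> dist_le V adj x T m"
  unfolding dist_le_def by force

lemma dist_le_0_iff: "dist_le V adj x T 0 \<longleftrightarrow> x \<in> V \<and> x \<in> T"
proof
  assume "dist_le V adj x T 0"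
  then obtain xs where xs: "walk_in adj V xs" "hd xs = x" "last xs \<in> T" "length xs \<le> 1"
    unfolding dist_le_def by auto
  then have "xs = [x]" by (cases xs) (auto simp: walk_in_def)
  then show "x \<in> V \<and> x \<in> T" using xs by (simp add: walk_in_def)
next
  assume "x \<in> V \<and> x \<in> T"
  then show "dist_le V adj x T 0"
    unfolding dist_le_def by (intro exI[of _ "[x]"]) (simp add: walk_in_def)
qed

lemma dist_le_Suc_iff:
  "dist_le V adj x T (Suc n) \<longleftrightarrow> x \<in> V \<and> x \<in> T \<or> (\<exists>y. adj x y \<and> dist_le V adj y T n)"
proof
  assume "dist_le V adj x T (Suc n)"
  then obtain xs where xs: "walk_in adj V xs" "hd xs = x" "last xs \<in> T" "length xs \<le> n + 2"
    unfolding dist_le_def by auto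
  then obtain ys where ys: "xs = x # ys" unfolding walk_in_def by (cases xs) auto
  show "x \<in> V \<and> x \<in> T \<or> (\<exists>y. adj x y \<and> dist_le V adj y T n)"
  proof (cases "ys = []")
    case True
    then show ?thesis using xs ys by (simp add: walk_in_Cons)
  next
    case False
    then have "adj x (hd ys)" "walk_in adj V ys" "last ys \<in> T" "length ys \<le> n + 1"
      using xs ys by (simp_all add: walk_in_Cons)
    then show ?thesis unfolding dist_le_def by blast
  qed
next
  assume "x \<in> V \<and> x \<in> T \<or> (\<exists>y. adj x y \<and> dist_le V adj y T n)"
  then show "dist_le V adj x T (Suc n)"
  proof
    assume "x \<in> V \<and> x \<in> T"
    then show ?thesis unfolding dist_le_def by (intro exI[of _ "[x]"]) (simp add: walk_in_def)
  next
    assume "\<exists>y. adj x y \<and> dist_le V adj y T n"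
    then obtain ys where ys: "adj x (hd ys)" "walk_in adj V ys" "last ys \<in> T" "length ys \<le> n + 1"
      unfolding dist_le_def by blast
    then have "ys \<noteq> []" by (simp add: walk_in_def)
    with ys adj_in_V(1)[OF ys(1)] show ?thesis
      unfolding dist_le_def by (intro exI[of _ "x # ys"]) (simp add: walk_in_Cons)
  qed
qed

lemma induced_path_singleton: "x \<in> V \<Longrightarrow> induced_path V adj [x]"
  unfolding induced_path_def using adj_irrefl by simp

lemma induced_path_Cons:
  assumes path: "induced_path V adj xs" and "x \<in> V" "x \<notin> set xs"
    and "adj x (hd xs)" and "\<forall>y \<in> set (tl xs). \<not> adj x y"
  shows "induced_path V adj (x # xs)"
proof -
  have "xs \<noteq> []" using path by (simp add: induced_path_def)
  have adj_x: "adj x (xs ! k) \<longleftrightarrow> k = 0" if "k < length xs" for k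
  proof (cases k)
    case (Suc m)
    then have "xs ! k \<in> set (tl xs)" using that \<open>xs \<noteq> []\<close> by (cases xs) auto
    then show ?thesis using assms(5) Suc by blast
  qed (use assms(4) \<open>xs \<noteq> []\<close> in \<open>simp add: hd_conv_nth\<close>)
  have "adj ((x # xs) ! i) ((x # xs) ! k) \<longleftrightarrow> (i = k + 1 \<or> k = i + 1)"
    if "i < length (x # xs)" "k < length (x # xs)" for i k
  proof (cases i; cases k)
    fix i' k' assume "i = Suc i'" "k = Suc k'"
    then show ?thesis using path that unfolding induced_path_def by simp
  qed (use that adj_x adj_sym adj_irrefl in auto)
  then show ?thesis using path assms(2,3) unfolding induced_path_def by auto
qed

definition nbrs_in :: "'a set \<Rightarrow> 'a \<Rightarrow> 'a set" where
  "nbrs_in S x = {y \<in> S. adj x y}"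

lemma finite_nbrs_in: "finite (nbrs_in S x)"
proof (rule finite_subset[OF _ finite_V])
  show "nbrs_in S x \<subseteq> V" unfolding nbrs_in_def using adj_in_V by blast
qed

lemma card_nbrs_in_ge:
  assumes "Y \<subseteq> S" "\<forall>y \<in> Y. adj x y"
  shows "card Y \<le> card (nbrs_in S x)"
  using assms finite_nbrs_in unfolding nbrs_in_def by (intro card_mono) auto

context
  fixes S :: "'a set" and s :: 'a
  assumes S_subset_V: "S \<subseteq> V" and s_in_S: "s \<in> S"
    and deg_le_2: "\<And>x. x \<in> S \<Longrightarrow> card (nbrs_in S x) \<le> 2"
    and deg_s_le_1: "card (nbrs_in S s) \<le> 1"
begin

lemma path_nbr_outside_is_hd:
  assumes path: "induced_path V adj xs" and "set xs \<subseteq> S" "last xs = s"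
    and q: "q \<in> S" "q \<notin> set xs" and i: "i < length xs" "adj q (xs ! i)"
  shows "i = 0"
proof (rule ccontr)
  assume "i \<noteq> 0"
  have path_adj: "adj (xs ! k) (xs ! l) \<longleftrightarrow> k = l + 1 \<or> l = k + 1"
    if "k < length xs" "l < length xs" for k l
    using path that unfolding induced_path_def by blast
  have xs_S: "xs ! k \<in> S" if "k < length xs" for k
    using \<open>set xs \<subseteq> S\<close> nth_mem[OF that] by blast
  let ?prev = "xs ! (i - 1)"
  have prev: "adj (xs ! i) ?prev" "?prev \<noteq> q" "?prev \<in> S"
    using path_adj[of i "i - 1"] \<open>i \<noteq> 0\<close> i(1) q(2) xs_S[of "i - 1"] by auto
  have qi: "adj (xs ! i) q" using i(2) adj_sym by blast
  show False
  proof (cases "Suc i < length xs")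
    case True
    let ?succ = "xs ! Suc i"
    have "distinct xs" using path by (simp add: induced_path_def)
    then have succ: "adj (xs ! i) ?succ" "?succ \<noteq> q" "?succ \<noteq> ?prev" "?succ \<in> S"
      using path_adj[of i "Suc i"] True q(2) nth_eq_iff_index_eq[of xs "Suc i" "i - 1"]
        xs_S[of "Suc i"] \<open>i \<noteq> 0\<close> by auto
    have "card {?prev, ?succ, q} \<le> card (nbrs_in S (xs ! i))"
      using prev succ qi q(1) by (intro card_nbrs_in_ge) auto
    then show False using deg_le_2[OF xs_S[OF i(1)]] prev(2) succ(2,3) by simp
  next
    case False
    then have "i = length xs - 1" using i(1) by simp
    then have "xs ! i = s" using \<open>last xs = s\<close> path by (simp add: last_conv_nth induced_path_def)
    have "card {?prev, q} \<le> card (nbrs_in S s)"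
      using prev qi q(1) \<open>xs ! i = s\<close> by (intro card_nbrs_in_ge) auto
    then show False using deg_s_le_1 prev(2) by simp
  qed
qed

lemma induced_path_Cons_nbr_outside:
  assumes path: "induced_path V adj xs" and "set xs \<subseteq> S" "last xs = s"
    and "q \<in> S" "q \<notin> set xs" "c \<in> set xs" "adj c q"
  shows "induced_path V adj (q # xs)"
proof (rule induced_path_Cons[OF path])
  note only_hd = path_nbr_outside_is_hd[OF assms(1-5)]
  have "xs \<noteq> []" using path by (simp add: induced_path_def)
  obtain i where "i < length xs" "xs ! i = c" using assms(6) by (auto simp: in_set_conv_nth)
  then show "adj q (hd xs)"
    using only_hd[of i] \<open>adj c q\<close> adj_sym \<open>xs \<noteq> []\<close> by (auto simp: hd_conv_nth)
  show "\<forall>y \<in> set (tl xs). \<not> adj q y"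
  proof
    fix y assume "y \<in> set (tl xs)"
    then obtain k where "Suc k < length xs" "y = xs ! Suc k"
      by (auto simp: in_set_conv_nth nth_tl less_diff_conv)
    then show "\<not> adj q y" using only_hd[of "Suc k"] by blast
  qed
qed (use assms(4,5) S_subset_V in auto)

lemma component_is_induced_path: "\<exists>xs. induced_path V adj xs \<and> set xs = component_of adj S s"
proof -
  define K where "K = component_of adj S s"
  have "K \<subseteq> S" unfolding K_def using component_of_subset[OF s_in_S] .
  then have "finite K" using S_subset_V by (meson finite_V rev_finite_subset subset_trans)
  have reach: "y \<in> K \<longleftrightarrow> (adj_on adj S)\<^sup>*\<^sup>* s y" for y
    unfolding K_def using mem_component_of_iff[OF s_in_S] .
  have grow: "\<exists>q \<in> K. induced_path V adj (q # xs)"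
    if path: "induced_path V adj xs" and sub: "set xs \<subseteq> K"
      and last: "last xs = s" and not_all: "set xs \<noteq> K" for xs
  proof -
    obtain y where "y \<in> K" "y \<notin> set xs" using sub not_all by blast
    moreover have "s \<in> set xs" using last path by (auto simp: induced_path_def)
    ultimately obtain c q where cq: "c \<in> set xs" "q \<notin> set xs" "adj_on adj S c q"
      using rtranclp_leaves_set[of "adj_on adj S" s y "set xs"] reach[of y] by blast
    have "(adj_on adj S)\<^sup>*\<^sup>* s c" using cq(1) sub reach[of c] by blast
    then have "(adj_on adj S)\<^sup>*\<^sup>* s q" using cq(3) by (rule rtranclp.rtrancl_into_rtrancl)
    then have "q \<in> K" using reach[of q] by blast
    moreover have "q \<in> S" "adj c q" using cq(3) by (simp_all add: adj_on_def)
    ultimately show ?thesis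
      using induced_path_Cons_nbr_outside[OF path _ last _ cq(2,1)] sub \<open>K \<subseteq> S\<close> by blast
  qed
  have "\<exists>ys. induced_path V adj ys \<and> set ys = K"
    if "induced_path V adj xs" "set xs \<subseteq> K" "last xs = s" for xs
    using that
  proof (induction "card K - length xs" arbitrary: xs rule: less_induct)
    case less
    show ?case
    proof (cases "set xs = K")
      case False
      then obtain q where q: "q \<in> K" "induced_path V adj (q # xs)"
        using grow less.prems by blast
      have "length (q # xs) = card (set (q # xs))"
        using q(2) by (simp add: induced_path_def distinct_card)
      also have "\<dots> \<le> card K" using q(1) less.prems(2) \<open>finite K\<close> by (intro card_mono) auto
      finally have "card K - length (q # xs) < card K - length xs" by simp
      moreover have "set (q # xs) \<subseteq> K" using q(1) less.prems(2) by simp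
      moreover have "last (q # xs) = s" using less.prems(1,3) by (simp add: induced_path_def)
      ultimately show ?thesis using less.hyps q(2) by blast
    qed (use less.prems in blast)
  qed
  moreover have "induced_path V adj [s]" "set [s] \<subseteq> K" "last [s] = s"
    using induced_path_singleton S_subset_V s_in_S reach[of s] by auto
  ultimately show ?thesis unfolding K_def by blast
qed

end

section \<open>Private neighbours and the sets F_e\<close>

lemma finite_Fset: "finite (Fset adj e)"
proof (rule finite_subset)
  show "Fset adj e \<subseteq> Pow V" unfolding Fset_def edges_def using adj_in_V by blast
qed (simp add: finite_V)

definition private_nbrs :: "'a \<Rightarrow> 'a \<Rightarrow> 'a set" where
  "private_nbrs x y = {a. adj x a \<and> a \<noteq> y \<and> \<not> adj y a}"

lemma finite_private_nbrs: "finite (private_nbrs x y)"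
proof (rule finite_subset[OF _ finite_V])
  show "private_nbrs x y \<subseteq> V" unfolding private_nbrs_def using adj_in_V by blast
qed

lemma private_nbr_in_Fset:
  assumes "adj x y" "a \<in> private_nbrs x y"
  shows "{x, a} \<in> Fset adj {x, y}"
proof -
  have xa: "adj x a" "a \<noteq> y" "\<not> adj y a" using assms(2) unfolding private_nbrs_def by auto
  have "{x, y} \<union> {x, a} = {y, x, a}" by auto
  moreover have "y \<noteq> x" "x \<noteq> a" using adj_neq assms(1) xa(1) by auto
  ultimately have "induces_P3 adj ({x, y} \<union> {x, a})"
    unfolding induces_P3_def using adj_sym[OF assms(1)] xa
    by (intro exI[of _ y] exI[of _ x] exI[of _ a]) simp
  moreover have "{x, a} \<in> edges adj" unfolding edges_def using xa(1) by blast
  ultimately show ?thesis unfolding Fset_def by blast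
qed

lemma card_private_nbrs_le_card_Fset:
  assumes "adj x y"
  shows "card (private_nbrs x y) + card (private_nbrs y x) \<le> card (Fset adj {x, y})"
proof -
  have inj: "inj_on (\<lambda>a. {x, a}) (private_nbrs x y)" for x y
    using adj_neq unfolding private_nbrs_def inj_on_def by (auto simp: doubleton_eq_iff)
  have "{x, a} \<noteq> {y, b}" if "b \<in> private_nbrs y x" for a b
    using that adj_neq[OF assms] unfolding private_nbrs_def by (auto simp: doubleton_eq_iff)
  then have disj: "(\<lambda>a. {x, a}) ` private_nbrs x y \<inter> (\<lambda>b. {y, b}) ` private_nbrs y x = {}"
    by blast
  have "Fset adj {y, x} = Fset adj {x, y}" by (simp add: insert_commute)
  then have sub: "(\<lambda>a. {x, a}) ` private_nbrs x y \<union> (\<lambda>b. {y, b}) ` private_nbrs y x \<subseteq> Fset adj {x, y}"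
    using private_nbr_in_Fset[OF assms] private_nbr_in_Fset[OF adj_sym[OF assms]]
    by (auto simp only: image_subset_iff Un_subset_iff)
  have "card (private_nbrs x y) + card (private_nbrs y x)
      = card ((\<lambda>a. {x, a}) ` private_nbrs x y \<union> (\<lambda>b. {y, b}) ` private_nbrs y x)"
    using disj finite_private_nbrs by (simp add: card_Un_disjoint card_image[OF inj])
  also have "\<dots> \<le> card (Fset adj {x, y})"
    using sub finite_Fset by (rule card_mono[rotated])
  finally show ?thesis .
qed

lemma private_nbr_unique:
  assumes "adj x y" "card (Fset adj {x, y}) < 3"
    and "a \<in> private_nbrs x y" "b \<in> private_nbrs y x" "b' \<in> private_nbrs y x"
  shows "b = b'"
proof (rule ccontr)
  assume "b \<noteq> b'"
  have "1 \<le> card (private_nbrs x y)"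
    using assms(3) finite_private_nbrs by (auto simp: Suc_le_eq card_gt_0_iff)
  moreover have "card {b, b'} \<le> card (private_nbrs y x)"
    using assms(4,5) finite_private_nbrs by (intro card_mono) auto
  ultimately have "3 \<le> card (private_nbrs x y) + card (private_nbrs y x)"
    using \<open>b \<noteq> b'\<close> by simp
  then show False using card_private_nbrs_le_card_Fset[OF assms(1)] assms(2) by linarith
qed

end

section \<open>The levels B_i\<close>

locale P3_levels = finite_simple_graph +
  fixes u v w :: 'a
  assumes adj_uv: "adj u v" and adj_vw: "adj v w" and not_adj_uw: "\<not> adj u w" and u_neq_w: "u \<noteq> w"
    and card_Fset_lt_4: "\<forall>e \<in> edges adj. card (Fset adj e) < 4"
begin

abbreviation "A \<equiv> Aset u v w"
abbreviation "B \<equiv> Bbase V adj u v w"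
abbreviation "C \<equiv> Cset V adj u v w"
abbreviation "D \<equiv> Dset V adj u v w"
abbreviation "L \<equiv> Bl V adj u v w"
abbreviation "E \<equiv> Eset V adj u v w"
abbreviation "j \<equiv> jidx V adj u v w"
abbreviation "dist_B x n \<equiv> dist_le V adj x B n"

lemma card_A: "card A = 3"
  using adj_neq[OF adj_uv] adj_neq[OF adj_vw] u_neq_w by (simp add: Aset_def)

lemma A_subset_V: "A \<subseteq> V"
  using adj_in_V adj_uv adj_vw by (auto simp: Aset_def)

lemma nbrs_in_A_eq_A_iff_C: "x \<in> V \<Longrightarrow> {a \<in> A. adj x a} = A \<longleftrightarrow> x \<in> C"
  by (auto simp: Aset_def Cset_def)

lemma not_adj_A_outside_ABC:
  assumes "x \<notin> A" "x \<notin> B" "x \<notin> C" "a \<in> A"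
  shows "\<not> adj x a"
proof
  assume "adj x a"
  let ?N = "{a \<in> A. adj x a}"
  have "x \<in> V" using adj_in_V(1)[OF \<open>adj x a\<close>] .
  have fin: "finite ?N" by (simp add: Aset_def)
  have "?N \<noteq> {}" using \<open>adj x a\<close> assms(4) by blast
  then have "card ?N \<noteq> 0" using fin by simp
  moreover have "card ?N \<noteq> 1 \<and> card ?N \<noteq> 2"
    using assms(1,2) \<open>x \<in> V\<close> unfolding Bbase_def by blast
  moreover have "card ?N \<noteq> 3"
  proof
    assume "card ?N = 3"
    then have "?N = A" using card_A by (intro card_subset_eq) (auto simp: Aset_def)
    then show False using nbrs_in_A_eq_A_iff_C \<open>x \<in> V\<close> assms(3) by blast
  qed
  moreover have "card ?N \<le> card A" by (rule card_mono) (auto simp: Aset_def)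
  ultimately show False using card_A by linarith
qed

lemma B_has_nbr_in_A: "x \<in> B \<Longrightarrow> \<exists>a \<in> A. adj x a"
proof -
  assume "x \<in> B"
  then have "card {a \<in> A. adj x a} \<noteq> 0" unfolding Bbase_def by auto
  then show ?thesis using card.empty by (metis (no_types, lifting) empty_Collect_eq)
qed

lemma B_outside_ACD: "x \<in> B \<Longrightarrow> x \<in> V \<and> x \<notin> A \<and> x \<notin> C \<and> x \<notin> D"
proof -
  assume "x \<in> B"
  then have "x \<in> V" "x \<notin> A" "card {a \<in> A. adj x a} \<noteq> 3" unfolding Bbase_def by auto
  then have "x \<notin> C" using nbrs_in_A_eq_A_iff_C[OF \<open>x \<in> V\<close>] card_A by metis
  then show ?thesis using \<open>x \<in> B\<close> \<open>x \<in> V\<close> \<open>x \<notin> A\<close> unfolding Dset_def by blast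
qed

lemma level_0: "L 0 = B"
  by (simp add: Bl_def)

lemma mem_level_Suc_iff:
  "x \<in> L (Suc i) \<longleftrightarrow> x \<in> V - (A \<union> B \<union> C \<union> D) \<and> dist_B x (Suc i) \<and> \<not> dist_B x i"
  by (simp add: Bl_def)

lemma level_outside_AC: "x \<in> L i \<Longrightarrow> x \<in> V \<and> x \<notin> A \<and> x \<notin> C"
  using B_outside_ACD by (cases i) (auto simp: level_0 mem_level_Suc_iff)

lemma dist_B_0_iff: "dist_B x 0 \<longleftrightarrow> x \<in> B"
  using dist_le_0_iff B_outside_ACD by blast

lemma dist_B_level: "x \<in> L i \<Longrightarrow> dist_B x i"
  by (cases i) (simp_all add: level_0 mem_level_Suc_iff dist_B_0_iff)

lemma level_le_if_dist_B: "x \<in> L i \<Longrightarrow> dist_B x n \<Longrightarrow> i \<le> n"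
proof (cases i)
  case (Suc k)
  assume "x \<in> L i" "dist_B x n"
  then have "\<not> dist_B x k" using Suc by (simp add: mem_level_Suc_iff)
  then have "\<not> n \<le> k" using dist_le_mono[OF \<open>dist_B x n\<close>] by blast
  then show "i \<le> n" using Suc by simp
qed simp

lemma level_unique: "x \<in> L i \<Longrightarrow> x \<in> L k \<Longrightarrow> i = k"
  using level_le_if_dist_B[OF _ dist_B_level] by (meson le_antisym)

lemma level_neq: "x \<in> L i \<Longrightarrow> y \<in> L k \<Longrightarrow> i \<noteq> k \<Longrightarrow> x \<noteq> y"
  using level_unique by blast

lemma level_adj_le:
  assumes "adj x y" "x \<in> L i" "y \<in> L k"
  shows "k \<le> Suc i"
proof -
  have "dist_B y (Suc i)"
    using dist_le_Suc_iff[of y B i] adj_sym[OF assms(1)] dist_B_level[OF assms(2)] by blast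
  then show ?thesis by (rule level_le_if_dist_B[OF assms(3)])
qed

lemma levels_far:
  assumes "x \<in> L i" "y \<in> L k" "Suc (Suc k) \<le> i"
  shows "\<not> adj x y \<and> x \<noteq> y"
proof
  show "\<not> adj x y" using level_adj_le[OF _ assms(2,1)] adj_sym assms(3) by fastforce
  show "x \<noteq> y" using level_unique[OF assms(1)] assms(2,3) by fastforce
qed

lemma level_Suc_not_adj_A: "x \<in> L (Suc i) \<Longrightarrow> a \<in> A \<Longrightarrow> \<not> adj x a"
  using not_adj_A_outside_ABC by (simp add: mem_level_Suc_iff)

lemma level_Suc_not_adj_C: "x \<in> L (Suc i) \<Longrightarrow> c \<in> C \<Longrightarrow> \<not> adj x c"
  unfolding mem_level_Suc_iff Dset_def by blast

lemma level_Suc_not_adj_D: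
  assumes x: "x \<in> L (Suc i)" and "d \<in> D"
  shows "\<not> adj x d"
proof
  assume "adj x d"
  obtain c where c: "c \<in> C" "adj d c" and d: "d \<in> V" "d \<notin> A" "d \<notin> B" "d \<notin> C"
    using \<open>d \<in> D\<close> unfolding Dset_def by auto
  have "A \<subseteq> private_nbrs c d"
    using c(1) d(2) not_adj_A_outside_ABC[OF d(2-4)] adj_sym
    unfolding private_nbrs_def Cset_def by (auto simp: Aset_def)
  then have "3 \<le> card (private_nbrs c d)"
    using card_A finite_private_nbrs by (metis card_mono)
  moreover have "x \<in> private_nbrs d c"
    using adj_sym[OF \<open>adj x d\<close>] level_Suc_not_adj_C[OF x c(1)] level_outside_AC[OF x] c(1) adj_sym
    unfolding private_nbrs_def by blast
  then have "1 \<le> card (private_nbrs d c)"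
    using finite_private_nbrs by (metis One_nat_def Suc_leI card_gt_0_iff empty_iff)
  ultimately have "4 \<le> card (Fset adj {c, d})"
    using card_private_nbrs_le_card_Fset[OF adj_sym[OF c(2)]] by linarith
  moreover have "{c, d} \<in> edges adj" using adj_sym[OF c(2)] unfolding edges_def by blast
  ultimately show False using card_Fset_lt_4 by fastforce
qed

lemma in_some_level:
  assumes "x \<in> V" "x \<notin> A" "x \<notin> C" "x \<notin> D" "dist_B x n"
  shows "\<exists>k. x \<in> L k"
proof (cases "x \<in> B")
  case False
  define k where "k = (LEAST n. dist_B x n)"
  have "dist_B x k" unfolding k_def using assms(5) by (rule LeastI)
  moreover have "k \<noteq> 0" using \<open>dist_B x k\<close> False dist_B_0_iff by (metis (full_types))
  then obtain k' where "k = Suc k'" using not0_implies_Suc by blast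
  moreover have "\<not> dist_B x k'"
    using not_less_Least[of k' "\<lambda>n. dist_B x n"] \<open>k = Suc k'\<close> unfolding k_def by simp
  ultimately have "x \<in> L (Suc k')" using assms(1-4) False by (simp add: mem_level_Suc_iff)
  then show ?thesis by blast
qed (use level_0 in blast)

lemma level_Suc_nbr_in_level:
  assumes x: "x \<in> L (Suc i)" and "adj x y"
  shows "\<exists>k. y \<in> L k"
proof (rule in_some_level)
  show "y \<in> V" using adj_in_V(2)[OF \<open>adj x y\<close>] .
  show "y \<notin> A" using level_Suc_not_adj_A[OF x] \<open>adj x y\<close> by blast
  show "y \<notin> C" using level_Suc_not_adj_C[OF x] \<open>adj x y\<close> by blast
  show "y \<notin> D" using level_Suc_not_adj_D[OF x] \<open>adj x y\<close> by blast
  show "dist_B y (Suc (Suc i))"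
    using dist_le_Suc_iff[of y B "Suc i"] adj_sym[OF \<open>adj x y\<close>] dist_B_level[OF x] by blast
qed

lemma parent_exists:
  assumes x: "x \<in> L (Suc i)"
  shows "\<exists>p \<in> L i. adj x p"
proof -
  have "dist_B x (Suc i)" "x \<notin> B" using x by (simp_all add: mem_level_Suc_iff)
  then obtain p where p: "adj x p" "dist_B p i" using dist_le_Suc_iff by blast
  then obtain k where k: "p \<in> L k" using level_Suc_nbr_in_level[OF x] by blast
  have "k \<le> i" using level_le_if_dist_B[OF k p(2)] .
  moreover have "Suc i \<le> Suc k" using level_adj_le[OF adj_sym[OF p(1)] k x] .
  ultimately show ?thesis using k p(1) by (intro bexI[of _ p]) simp_all
qed

definition below :: "nat \<Rightarrow> 'a set" where
  "below k = A \<union> (\<Union>i<k. L i)"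

lemma below_mono: "k \<le> m \<Longrightarrow> below k \<subseteq> below m"
  unfolding below_def by auto

lemma level_subset_below: "i < k \<Longrightarrow> L i \<subseteq> below k"
  unfolding below_def by auto

lemma nbr_below:
  assumes "x \<in> L k"
  shows "\<exists>r \<in> below k. adj x r"
proof (cases k)
  case 0
  then show ?thesis using B_has_nbr_in_A assms unfolding below_def by (simp add: level_0)
next
  case (Suc i)
  then obtain p where "p \<in> L i" "adj x p" using parent_exists assms by blast
  moreover have "L i \<subseteq> below k" unfolding below_def using Suc by blast
  ultimately show ?thesis by blast
qed

lemma below_far:
  assumes "y \<in> below k" "x \<in> L i" "k < i"
  shows "\<not> adj x y \<and> x \<noteq> y"
proof (cases "y \<in> A")
  case True
  obtain i' where "i = Suc i'" using assms(3) less_imp_Suc_add by blast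
  then show ?thesis using level_Suc_not_adj_A True assms(2) level_outside_AC by blast
next
  case False
  then obtain m where "m < k" "y \<in> L m" using assms(1) unfolding below_def by blast
  then show ?thesis using levels_far[OF assms(2)] assms(3) by simp
qed

lemma card_Fset_lt_3_below_j: "e \<in> E k \<Longrightarrow> enat k < j \<Longrightarrow> card (Fset adj e) < 3"
proof (rule ccontr)
  assume "e \<in> E k" "enat k < j" "\<not> card (Fset adj e) < 3"
  then have ex: "\<exists>i. \<exists>e \<in> E i. 3 \<le> card (Fset adj e)"
    by (intro exI[of _ k] bexI[of _ e]) simp_all
  then have "j = enat (LEAST i. \<exists>e \<in> E i. 3 \<le> card (Fset adj e))" by (simp add: jidx_def)
  then have "k < (LEAST i. \<exists>e \<in> E i. 3 \<le> card (Fset adj e))" using \<open>enat k < j\<close> by simp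
  then show False using not_less_Least \<open>e \<in> E k\<close> \<open>\<not> card (Fset adj e) < 3\<close> by force
qed

lemma level_edge_card_Fset_lt_3:
  "adj x y \<Longrightarrow> x \<in> L k \<Longrightarrow> y \<in> L (Suc k) \<Longrightarrow> enat k < j \<Longrightarrow> card (Fset adj {x, y}) < 3"
  using card_Fset_lt_3_below_j unfolding Eset_def by blast

lemma unique_child:
  assumes p: "p \<in> L (Suc k)" and "enat (Suc k) \<le> j"
    and c: "c \<in> L (Suc (Suc k))" "adj p c" and c': "c' \<in> L (Suc (Suc k))" "adj p c'"
  shows "c = c'"
proof -
  obtain q where q: "q \<in> L k" "adj p q" using parent_exists[OF p] by blast
  obtain r where r: "r \<in> below k" "adj q r" using nbr_below[OF q(1)] by blast
  have "card (Fset adj {q, p}) < 3"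
    using level_edge_card_Fset_lt_3[OF adj_sym[OF q(2)] q(1) p] assms(2) by (simp add: Suc_ile_eq)
  moreover have "r \<in> private_nbrs q p"
    using r below_far[OF r(1) p] adj_sym unfolding private_nbrs_def by blast
  moreover have "c \<in> private_nbrs p q" if "c \<in> L (Suc (Suc k))" "adj p c" for c
    using that levels_far[OF that(1) q(1)] adj_sym unfolding private_nbrs_def by blast
  ultimately show ?thesis using private_nbr_unique adj_sym[OF q(2)] c c' by blast
qed

text \<open>The grandchild d gives the edge pc a private neighbour on the side of c; this keeps p
  off the second vertex of A on the path.\<close>
lemma induced_path_B_to_A:
  assumes "0 < j" "p \<in> L 0" "c \<in> L 1" "d \<in> L 2" "adj p c" "adj c d"
  shows "\<exists>a a'. induced_path V adj [p, a, a'] \<and> a \<in> A \<and> a' \<in> A"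
proof -
  have "p \<in> B" using assms(2) by (simp add: level_0)
  then obtain a where a: "a \<in> A" "adj p a" using B_has_nbr_in_A by blast
  obtain a' where a': "a' \<in> A" "adj a a'"
    using a(1) adj_uv adj_vw adj_sym by (auto simp: Aset_def)
  have c: "c \<in> L (Suc 0)" and d: "d \<in> L (Suc (Suc 0))"
    using assms(3,4) by (simp_all add: numeral_2_eq_2)
  have "\<not> adj p a'"
  proof
    assume "adj p a'"
    have "card (Fset adj {c, p}) < 3"
      using level_edge_card_Fset_lt_3[OF assms(5,2) c] assms(1) by (simp add: enat_0 insert_commute)
    moreover have "d \<in> private_nbrs c p"
      using assms(6) levels_far[OF d assms(2)] adj_sym unfolding private_nbrs_def by auto
    moreover have "x \<in> private_nbrs p c" if "x \<in> A" "adj p x" for x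
      using that level_Suc_not_adj_A[OF c] level_outside_AC[OF c] adj_sym
      unfolding private_nbrs_def by blast
    ultimately have "a = a'"
      using private_nbr_unique[OF adj_sym[OF assms(5)]] a a' \<open>adj p a'\<close> by blast
    then show False using a'(2) adj_irrefl by simp
  qed
  have "induced_path V adj [a, a']"
    using induced_path_Cons[OF induced_path_singleton] a(1) a' A_subset_V adj_neq[OF a'(2)] by auto
  then have "induced_path V adj [p, a, a']"
    by (rule induced_path_Cons) (use a level_outside_AC[OF assms(2)] \<open>\<not> adj p a'\<close> a'(1) in auto)
  then show ?thesis using a(1) a'(1) by blast
qed

lemma descending_induced_path:
  assumes "0 < j" "p \<in> L k" "c \<in> L (Suc k)" "d \<in> L (Suc (Suc k))" "adj p c" "adj c d"
  shows "\<exists>P. induced_path V adj P \<and> hd P = p \<and> length P = k + 3 \<and> set (tl P) \<subseteq> below k"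
  using assms(2-)
proof (induction k arbitrary: p c d)
  case 0
  have "c \<in> L 1" "d \<in> L 2" using "0.prems"(2,3) by (simp_all add: numeral_2_eq_2)
  then obtain a a' where "induced_path V adj [p, a, a']" "a \<in> A" "a' \<in> A"
    using induced_path_B_to_A[OF assms(1) "0.prems"(1) _ _ "0.prems"(4,5)] by blast
  then show ?case by (intro exI[of _ "[p, a, a']"]) (simp add: below_def)
next
  case (Suc k)
  obtain q where q: "q \<in> L k" "adj p q" using parent_exists[OF Suc.prems(1)] by blast
  obtain P where P: "induced_path V adj P" "hd P = q" "length P = k + 3" "set (tl P) \<subseteq> below k"
    using Suc.IH[OF q(1) Suc.prems(1,2) adj_sym[OF q(2)] Suc.prems(4)] by blast
  have "P \<noteq> []" using P(3) by auto
  then have set_P: "set P = insert q (set (tl P))" using P(2) by (cases P) auto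
  have far: "\<not> adj p y \<and> p \<noteq> y" if "y \<in> set (tl P)" for y
    using below_far[OF _ Suc.prems(1)] P(4) that by blast
  have "p \<notin> set P"
    using far set_P adj_neq[OF q(2)] by auto
  then have "induced_path V adj (p # P)"
    using induced_path_Cons[OF P(1)] level_outside_AC[OF Suc.prems(1)] q(2) P(2) far by blast
  moreover have "set (tl (p # P)) \<subseteq> below (Suc k)"
    using set_P P(4) below_mono[of k "Suc k"] level_subset_below[of k "Suc k"] q(1) by auto
  ultimately show ?case using P(3) by (intro exI[of _ "p # P"]) simp
qed

lemma two_parents_induced_path:
  assumes "0 < j" and y: "y \<in> L (Suc (Suc (Suc k)))"
    and x: "x \<in> L (Suc (Suc k))" "adj y x" and x': "x' \<in> L (Suc (Suc k))" "adj y x'"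
    and "x \<noteq> x'" "\<not> adj x x'" and z: "z \<in> L (Suc k)" "adj x z" "\<not> adj z x'"
  shows "\<exists>P. induced_path V adj P \<and> length P = k + 7"
proof -
  obtain P where P: "induced_path V adj P" "hd P = z" "length P = Suc k + 3"
    and below: "set (tl P) \<subseteq> below (Suc k)"
    using descending_induced_path[OF assms(1) z(1) x(1) y adj_sym[OF z(2)] adj_sym[OF x(2)]] by blast
  then obtain T where T: "P = z # T" by (cases P) auto
  have far: "\<not> adj t r \<and> t \<noteq> r" if "t \<in> L i" "Suc k < i" "r \<in> set T" for t i r
    using below_far[OF _ that(1,2)] below that(3) T by auto
  have "induced_path V adj (x # z # T)"
    using P(1) unfolding T
    by (rule induced_path_Cons)
      (use far[OF x(1)] level_outside_AC[OF x(1)] adj_neq[OF z(2)] z(2) in auto)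
  then have "induced_path V adj (y # x # z # T)"
    by (rule induced_path_Cons)
      (use far[OF y] level_outside_AC[OF y] levels_far[OF y z(1)] adj_neq[OF x(2)] x(2) in auto)
  then have "induced_path V adj (x' # y # x # z # T)"
    by (rule induced_path_Cons)
      (use far[OF x'(1)] level_outside_AC[OF x'(1)] level_neq[OF x'(1) z(1)] adj_neq[OF x'(2)]
        adj_sym x'(2) \<open>x \<noteq> x'\<close> \<open>\<not> adj x x'\<close> z(3) in auto)
  moreover have "length (x' # y # x # z # T) = k + 7" using P(3) T by simp
  ultimately show ?thesis by blast
qed

lemma adjacent_parents_eq:
  assumes "enat (Suc (Suc k)) \<le> j" and y: "y \<in> L (Suc (Suc (Suc k)))"
    and x: "x \<in> L (Suc (Suc k))" "adj y x" and x': "x' \<in> L (Suc (Suc k))" "adj y x'"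
    and "adj x x'" and z: "z \<in> L (Suc k)" "adj x z"
  shows "x = x'"
proof -
  have "adj z x'"
  proof (rule ccontr)
    assume "\<not> adj z x'"
    obtain t where t: "t \<in> below (Suc k)" "adj z t" using nbr_below[OF z(1)] by blast
    have "card (Fset adj {z, x}) < 3"
      using level_edge_card_Fset_lt_3[OF adj_sym[OF z(2)] z(1) x(1)] assms(1) by (simp add: Suc_ile_eq)
    moreover have "t \<in> private_nbrs z x"
      using t below_far[OF t(1) x(1)] adj_sym unfolding private_nbrs_def by blast
    moreover have "y \<in> private_nbrs x z"
      using x(2) levels_far[OF y z(1)] adj_sym unfolding private_nbrs_def by blast
    moreover have "x' \<in> private_nbrs x z"
      using \<open>adj x x'\<close> \<open>\<not> adj z x'\<close> level_neq[OF x'(1) z(1)]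
      unfolding private_nbrs_def by auto
    ultimately have "y = x'" using private_nbr_unique adj_sym[OF z(2)] by blast
    then show False using level_neq[OF y x'(1)] by simp
  qed
  moreover have "enat (Suc k) \<le> j" using assms(1) Suc_ile_eq order_less_imp_le by blast
  ultimately show ?thesis using unique_child[OF z(1) _ x(1) adj_sym[OF z(2)] x'(1)] by blast
qed

lemma unique_nbr_outside_level_below:
  assumes y: "y \<in> L (Suc (Suc k))" and "enat (Suc (Suc k)) \<le> j"
    and a: "adj y a" "a \<notin> L (Suc k)" and b: "adj y b" "b \<notin> L (Suc k)"
  shows "a = b"
proof -
  obtain x where x: "x \<in> L (Suc k)" "adj y x" using parent_exists[OF y] by blast
  obtain z where z: "z \<in> below (Suc k)" "adj x z" using nbr_below[OF x(1)] by blast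
  have card_lt_3: "card (Fset adj {x, y}) < 3"
    using level_edge_card_Fset_lt_3[OF adj_sym[OF x(2)] x(1) y] assms(2) by (simp add: Suc_ile_eq)
  have z_private: "z \<in> private_nbrs x y"
    using z below_far[OF z(1) y] adj_sym unfolding private_nbrs_def by blast
  have nbr_private: "c \<in> private_nbrs y x" if c: "adj y c" "c \<notin> L (Suc k)" for c
  proof -
    have "\<not> adj x c"
    proof
      assume "adj x c"
      obtain m where m: "c \<in> L m" using level_Suc_nbr_in_level[OF y c(1)] by blast
      have "m \<le> Suc (Suc k)" using level_adj_le[OF \<open>adj x c\<close> x(1) m] .
      moreover have "Suc (Suc k) \<le> Suc m" using level_adj_le[OF adj_sym[OF c(1)] m y] .
      moreover have "m \<noteq> Suc k" using m c(2) by blast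
      ultimately have "m = Suc (Suc k)" by linarith
      moreover have "enat (Suc k) \<le> j" using assms(2) Suc_ile_eq order_less_imp_le by blast
      ultimately have "c = y"
        using unique_child[OF x(1) _ _ \<open>adj x c\<close> y adj_sym[OF x(2)]] m by blast
      then show False using c(1) adj_irrefl by simp
    qed
    moreover have "c \<noteq> x" using c(2) x(1) by blast
    ultimately show ?thesis using c(1) unfolding private_nbrs_def by blast
  qed
  show ?thesis
    using private_nbr_unique[OF adj_sym[OF x(2)] card_lt_3 z_private nbr_private[OF a] nbr_private[OF b]] .
qed

end

section \<open>Excluding an induced C4 and induced paths on seven vertices\<close>

locale P3_levels_C4_P7_free = P3_levels +
  assumes no_induced_C4: "\<forall>a b c d. \<not> induced_C4 adj a b c d"
    and no_long_induced_path: "\<forall>xs. induced_path V adj xs \<longrightarrow> length xs < 7"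
    and two_le_j: "2 \<le> j"
begin

definition B_2_j :: "'a set" where
  "B_2_j = {x. \<exists>i. 2 \<le> i \<and> enat i \<le> j \<and> x \<in> L i}"

lemma unique_parent:
  assumes y: "y \<in> L (Suc (Suc (Suc k)))" "enat (Suc (Suc (Suc k))) \<le> j"
    and x: "x \<in> L (Suc (Suc k))" "adj y x" and x': "x' \<in> L (Suc (Suc k))" "adj y x'"
  shows "x = x'"
proof (rule ccontr)
  assume "x \<noteq> x'"
  obtain z where z: "z \<in> L (Suc k)" "adj x z" using parent_exists[OF x(1)] by blast
  have "enat (Suc (Suc k)) \<le> j" using y(2) Suc_ile_eq order_less_imp_le by blast
  show False
  proof (cases "adj x x'")
    case True
    then show False using adjacent_parents_eq[OF \<open>enat (Suc (Suc k)) \<le> j\<close> y(1) x x' _ z] \<open>x \<noteq> x'\<close> by blast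
  next
    case False
    have "\<not> adj z x'"
    proof
      assume "adj z x'"
      have "induced_C4 adj y x z x'"
        unfolding induced_C4_def
        using x(2) z(2) \<open>adj z x'\<close> adj_sym[OF x'(2)] False \<open>x \<noteq> x'\<close> adj_neq[OF x(2)] adj_neq[OF x'(2)]
          adj_neq[OF z(2)] adj_neq[OF \<open>adj z x'\<close>] levels_far[OF y(1) z(1)] by simp
      then show False using no_induced_C4 by blast
    qed
    moreover have "0 < j" using order_less_le_trans[OF _ two_le_j, of 0] by simp
    ultimately obtain P where "induced_path V adj P" "length P = k + 7"
      using two_parents_induced_path[OF _ y(1) x x' \<open>x \<noteq> x'\<close> False z] by blast
    then show False using no_long_induced_path by fastforce
  qed
qed

lemma mem_B_2_j_iff: "x \<in> B_2_j \<longleftrightarrow> (\<exists>k. enat (Suc (Suc k)) \<le> j \<and> x \<in> L (Suc (Suc k)))"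
proof
  assume "x \<in> B_2_j"
  then obtain i where i: "2 \<le> i" "enat i \<le> j" "x \<in> L i" unfolding B_2_j_def by blast
  moreover have "i = Suc (Suc (i - 2))" using i(1) by simp
  ultimately show "\<exists>k. enat (Suc (Suc k)) \<le> j \<and> x \<in> L (Suc (Suc k))"
    by (intro exI[of _ "i - 2"]) simp
next
  assume "\<exists>k. enat (Suc (Suc k)) \<le> j \<and> x \<in> L (Suc (Suc k))"
  then obtain k where "enat (Suc (Suc k)) \<le> j" "x \<in> L (Suc (Suc k))" by blast
  then show "x \<in> B_2_j" unfolding B_2_j_def by (intro CollectI exI[of _ "Suc (Suc k)"]) simp
qed

lemma B_2_j_subset_V: "B_2_j \<subseteq> V"
  using level_outside_AC unfolding B_2_j_def by blast

lemma level_2_subset_B_2_j: "L 2 \<subseteq> B_2_j"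
  using two_le_j unfolding B_2_j_def by (auto simp: enat_numeral)

lemma level_1_disjoint_B_2_j: "x \<in> B_2_j \<Longrightarrow> x \<notin> L 1"
  unfolding mem_B_2_j_iff using level_unique[of x 1] by fastforce

lemma card_nbrs_in_B_2_j:
  assumes y: "y \<in> L (Suc (Suc k))" and "enat (Suc (Suc k)) \<le> j"
  shows "card (nbrs_in B_2_j y) \<le> (if k = 0 then 1 else 2)"
proof -
  let ?N = "nbrs_in B_2_j y"
  have fin: "finite (?N \<inter> L (Suc k))" "finite (?N - L (Suc k))"
    using finite_nbrs_in by simp_all
  have "card (?N \<inter> L (Suc k)) \<le> (if k = 0 then 0 else 1)"
  proof (cases k)
    case 0
    have "?N \<inter> L (Suc k) = {}"
      using 0 level_1_disjoint_B_2_j unfolding nbrs_in_def by auto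
    then show ?thesis by simp
  next
    case (Suc k')
    have "\<forall>a \<in> ?N \<inter> L (Suc k). \<forall>b \<in> ?N \<inter> L (Suc k). a = b"
      using unique_parent[of y k'] y assms(2) Suc unfolding nbrs_in_def by blast
    then show ?thesis using card_le_Suc0_iff_eq[OF fin(1)] Suc by simp
  qed
  moreover have "card (?N - L (Suc k)) \<le> 1"
  proof -
    have "\<forall>a \<in> ?N - L (Suc k). \<forall>b \<in> ?N - L (Suc k). a = b"
      using unique_nbr_outside_level_below[OF y assms(2)] unfolding nbrs_in_def by blast
    then show ?thesis using card_le_Suc0_iff_eq[OF fin(2)] by simp
  qed
  moreover have "card ?N \<le> card (?N \<inter> L (Suc k)) + card (?N - L (Suc k))"
    using card_Un_le[of "?N \<inter> L (Suc k)" "?N - L (Suc k)"] by (simp add: Int_Diff_Un)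
  ultimately show ?thesis by (simp split: if_splits)
qed

lemma card_nbrs_in_B_2_j_le_2:
  assumes "x \<in> B_2_j"
  shows "card (nbrs_in B_2_j x) \<le> 2"
proof -
  obtain k where "x \<in> L (Suc (Suc k))" "enat (Suc (Suc k)) \<le> j"
    using assms mem_B_2_j_iff by blast
  then show ?thesis using card_nbrs_in_B_2_j[of x k] by (simp split: if_splits)
qed

lemma card_nbrs_in_B_2_j_le_1:
  assumes "s \<in> L 2"
  shows "card (nbrs_in B_2_j s) \<le> 1"
proof -
  have "s \<in> L (Suc (Suc 0))" "enat (Suc (Suc 0)) \<le> j"
    using assms two_le_j by (simp_all add: numeral_2_eq_2[symmetric] enat_numeral)
  then show ?thesis using card_nbrs_in_B_2_j[of s 0] by simp
qed

lemma reaches_level_2: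
  "x \<in> L (Suc (Suc k)) \<Longrightarrow> enat (Suc (Suc k)) \<le> j \<Longrightarrow> \<exists>s \<in> L 2. (adj_on adj B_2_j)\<^sup>*\<^sup>* x s"
proof (induction k arbitrary: x)
  case 0
  then show ?case by (auto simp: numeral_2_eq_2)
next
  case (Suc k)
  obtain p where p: "p \<in> L (Suc (Suc k))" "adj x p" using parent_exists[OF Suc.prems(1)] by blast
  have "enat (Suc (Suc k)) \<le> j" using Suc.prems(2) Suc_ile_eq order_less_imp_le by blast
  then obtain s where "s \<in> L 2" "(adj_on adj B_2_j)\<^sup>*\<^sup>* p s" using Suc.IH p(1) by blast
  moreover have "adj_on adj B_2_j x p"
    using p Suc.prems \<open>enat (Suc (Suc k)) \<le> j\<close> unfolding adj_on_def mem_B_2_j_iff by blast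
  ultimately show ?case by (meson converse_rtranclp_into_rtranclp)
qed

lemma components_eq_image_level_2: "components adj B_2_j = component_of adj B_2_j ` L 2"
proof -
  have "component_of adj B_2_j x \<in> component_of adj B_2_j ` L 2" if x: "x \<in> B_2_j" for x
  proof -
    obtain k where "x \<in> L (Suc (Suc k))" "enat (Suc (Suc k)) \<le> j"
      using x mem_B_2_j_iff by blast
    then obtain s where s: "s \<in> L 2" "(adj_on adj B_2_j)\<^sup>*\<^sup>* x s" using reaches_level_2 by blast
    then have "s \<in> component_of adj B_2_j x" using mem_component_of_iff[OF x] by blast
    then have "component_of adj B_2_j x = component_of adj B_2_j s"
      using component_of_eq[OF x] by simp
    then show ?thesis using s(1) by (rule image_eqI)
  qed
  then have "component_of adj B_2_j ` B_2_j \<subseteq> component_of adj B_2_j ` L 2" by (rule image_subsetI)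
  moreover have "component_of adj B_2_j ` L 2 \<subseteq> component_of adj B_2_j ` B_2_j"
    using level_2_subset_B_2_j by (rule image_mono)
  ultimately show ?thesis unfolding components_eq_image by (rule antisym)
qed

lemma card_level_2_le_card_E_1: "card (L 2) \<le> card (E 1)"
proof -
  have "\<exists>p. p \<in> L 1 \<and> adj p s" if "s \<in> L 2" for s
    using parent_exists[of s 1, unfolded Suc_1] that adj_sym by blast
  then obtain p where p: "\<And>s. s \<in> L 2 \<Longrightarrow> p s \<in> L 1 \<and> adj (p s) s" by metis
  have "inj_on (\<lambda>s. {p s, s}) (L 2)"
  proof (rule inj_onI)
    fix s t assume "s \<in> L 2" "t \<in> L 2" "{p s, s} = {p t, t}"
    moreover have "s \<noteq> p t" using level_neq[of s 2 "p t" 1] \<open>s \<in> L 2\<close> p[OF \<open>t \<in> L 2\<close>] by simp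
    ultimately show "s = t" by (simp add: doubleton_eq_iff)
  qed
  moreover have "{p s, s} \<in> E 1" if "s \<in> L 2" for s
    unfolding Eset_def Suc_1 using p[OF that] that
    by (intro CollectI exI[of _ "p s"] exI[of _ s]) simp
  then have "(\<lambda>s. {p s, s}) ` L 2 \<subseteq> E 1" by blast
  moreover have "finite (E 1)"
  proof (rule finite_subset)
    show "E 1 \<subseteq> Pow V" unfolding Eset_def using adj_in_V by blast
  qed (simp add: finite_V)
  ultimately show ?thesis by (rule card_inj_on_le)
qed


lemma components_B_2_j_induced_paths:
  assumes "K \<in> components adj B_2_j"
  shows "\<exists>xs. induced_path V adj xs \<and> set xs = K"
proof -
  obtain s where "s \<in> L 2" "K = component_of adj B_2_j s"
    using assms unfolding components_eq_image_level_2 by blast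
  then show ?thesis
    using component_is_induced_path[OF B_2_j_subset_V _ card_nbrs_in_B_2_j_le_2 card_nbrs_in_B_2_j_le_1]
      level_2_subset_B_2_j by blast
qed

lemma card_components_B_2_j: "card (components adj B_2_j) \<le> card (E 1)"
proof -
  have "L 2 \<subseteq> V" using level_2_subset_B_2_j B_2_j_subset_V by (rule subset_trans)
  then have "finite (L 2)" using finite_V by (rule finite_subset)
  then have "card (component_of adj B_2_j ` L 2) \<le> card (L 2)" by (rule card_image_le)
  then show ?thesis unfolding components_eq_image_level_2 using card_level_2_le_card_E_1 by linarith
qed

end

theorem corollary2:
  fixes V :: "'a set" and adj :: "'a \<Rightarrow> 'a \<Rightarrow> bool" and u v w :: 'a
  assumes "simple_graph V adj"
    and "\<forall>e \<in> edges adj. card (Fset adj e) < 4"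
    and "\<forall>a b c d. \<not> induced_C4 adj a b c d"
    and "\<forall>xs. induced_path V adj xs \<longrightarrow> length xs < 7"
    and "u \<in> V" "v \<in> V" "w \<in> V" "u \<noteq> w"
    and "adj u v" "adj v w" "\<not> adj u w"
    and "jidx V adj u v w \<ge> 2"
  shows "(\<forall>K \<in> components adj {x. \<exists>i. 2 \<le> i \<and> enat i \<le> jidx V adj u v w \<and> x \<in> Bl V adj u v w i}.
            \<exists>xs. induced_path V adj xs \<and> set xs = K)
       \<and> card (components adj {x. \<exists>i. 2 \<le> i \<and> enat i \<le> jidx V adj u v w \<and> x \<in> Bl V adj u v w i})
           \<le> card (Eset V adj u v w 1)"
proof -
  interpret P3_levels_C4_P7_free V adj u v w
    by unfold_locales (fact assms)+
  have "{x. \<exists>i. 2 \<le> i \<and> enat i \<le> j \<and> x \<in> L i} = B_2_j"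
    by (simp add: B_2_j_def)
  then show ?thesis using components_B_2_j_induced_paths card_components_B_2_j by simp
qed

end
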